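(* Let $G$ be a finite, simple, connected graph of order $n$ which contains a cycle. Then $\beta(G)=n-g(G)+2$ if and only if $G$ is a cycle $C_n$, a complete graph $K_n$ with $n\geq 3$, or a complete bipartite graph $K_{r,s}$ with $r,s\geq 2$.
   Context: For vertices $x,y$ of a connected graph $G$, $d(x,y)$ denotes the length of a shortest $x$–$y$ path. A set $W\subseteq V(G)$ is a resolving set for $G$ if for every two distinct vertices $u,v\in V(G)$ there exists $w\in W$ with $d(u,w)\neq d(v,w)$. The metric dimension $\beta(G)$ is the minimum cardinality of a resolving set for $G$. The girth $g(G)$ is the length of a shortest cycle in $G$. *)

theory Defs
  imports Main
begin

definition simple_graph :: "'a set \<Rightarrow> ('a \<Rightarrow> 'a \<Rightarrow> bool) \<Rightarrow> bool" where
  "simple_graph V E \<longleftrightarrow> finite V \<and> (\<forall>x y. E x y \<longrightarrow> x \<in> V \<and> y \<in> V)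
     \<and> (\<forall>x y. E x y \<longrightarrow> E y x) \<and> (\<forall>x. \<not> E x x)"

text \<open>A walk given as list of vertices; its length is the number of edges.\<close>
definition walk :: "'a set \<Rightarrow> ('a \<Rightarrow> 'a \<Rightarrow> bool) \<Rightarrow> 'a list \<Rightarrow> bool" where
  "walk V E p \<longleftrightarrow> p \<noteq> [] \<and> set p \<subseteq> V \<and> (\<forall>i. Suc i < length p \<longrightarrow> E (p ! i) (p ! Suc i))"

definition connected_graph :: "'a set \<Rightarrow> ('a \<Rightarrow> 'a \<Rightarrow> bool) \<Rightarrow> bool" where
  "connected_graph V E \<longleftrightarrow> V \<noteq> {} \<and>
     (\<forall>x\<in>V. \<forall>y\<in>V. \<exists>p. walk V E p \<and> hd p = x \<and> last p = y)"

definition dist :: "'a set \<Rightarrow> ('a \<Rightarrow> 'a \<Rightarrow> bool) \<Rightarrow> 'a \<Rightarrow> 'a \<Rightarrow> nat" where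
  "dist V E x y = (LEAST k. \<exists>p. walk V E p \<and> hd p = x \<and> last p = y \<and> length p = Suc k)"

definition resolving_set :: "'a set \<Rightarrow> ('a \<Rightarrow> 'a \<Rightarrow> bool) \<Rightarrow> 'a set \<Rightarrow> bool" where
  "resolving_set V E W \<longleftrightarrow> W \<subseteq> V \<and>
     (\<forall>u\<in>V. \<forall>v\<in>V. u \<noteq> v \<longrightarrow> (\<exists>w\<in>W. dist V E u w \<noteq> dist V E v w))"

definition metric_dim :: "'a set \<Rightarrow> ('a \<Rightarrow> 'a \<Rightarrow> bool) \<Rightarrow> nat" where
  "metric_dim V E = (LEAST k. \<exists>W. resolving_set V E W \<and> card W = k)"

definition is_cycle :: "'a set \<Rightarrow> ('a \<Rightarrow> 'a \<Rightarrow> bool) \<Rightarrow> 'a list \<Rightarrow> bool" where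
  "is_cycle V E c \<longleftrightarrow> length c \<ge> 3 \<and> distinct c \<and> set c \<subseteq> V \<and>
     (\<forall>i < length c. E (c ! i) (c ! (Suc i mod length c)))"

definition has_cycle :: "'a set \<Rightarrow> ('a \<Rightarrow> 'a \<Rightarrow> bool) \<Rightarrow> bool" where
  "has_cycle V E \<longleftrightarrow> (\<exists>c. is_cycle V E c)"

definition girth :: "'a set \<Rightarrow> ('a \<Rightarrow> 'a \<Rightarrow> bool) \<Rightarrow> nat" where
  "girth V E = (LEAST k. \<exists>c. is_cycle V E c \<and> length c = k)"

definition graph_iso :: "'a set \<Rightarrow> ('a \<Rightarrow> 'a \<Rightarrow> bool) \<Rightarrow> 'b set \<Rightarrow> ('b \<Rightarrow> 'b \<Rightarrow> bool) \<Rightarrow> bool" where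
  "graph_iso V E V' E' \<longleftrightarrow> (\<exists>f. bij_betw f V V' \<and>
     (\<forall>x\<in>V. \<forall>y\<in>V. E x y \<longleftrightarrow> E' (f x) (f y)))"

definition cycle_graph :: "nat \<Rightarrow> nat set \<times> (nat \<Rightarrow> nat \<Rightarrow> bool)" where
  "cycle_graph n = ({0..<n}, \<lambda>i j. i < n \<and> j < n \<and> i \<noteq> j \<and>
      (j = Suc i mod n \<or> i = Suc j mod n))"

definition complete_graph :: "nat \<Rightarrow> nat set \<times> (nat \<Rightarrow> nat \<Rightarrow> bool)" where
  "complete_graph n = ({0..<n}, \<lambda>i j. i < n \<and> j < n \<and> i \<noteq> j)"

definition complete_bipartite :: "nat \<Rightarrow> nat \<Rightarrow> (nat \<times> nat) set \<times> (nat \<times> nat \<Rightarrow> nat \<times> nat \<Rightarrow> bool)" where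
  "complete_bipartite r s = ({0..<r} \<times> {0} \<union> {0..<s} \<times> {1},
      \<lambda>(i,a) (j,b). ((a = 0 \<and> i < r \<and> b = 1 \<and> j < s) \<or> (a = 1 \<and> i < s \<and> b = 0 \<and> j < r)))"

end

theory Submission
  imports Defs
begin

text \<open>A shortest cycle \<open>C\<close> of length \<open>g\<close> is isometric, so two consecutive vertices of \<open>C\<close>
  resolve \<open>C\<close>; together with all \<open>n - g\<close> vertices off \<open>C\<close> they form a resolving set, whence
  \<open>\<beta> \<le> n - g + 2\<close>. For the converse one saves a landmark unless the graph is extremal:
  if \<open>g = 3\<close>, two non-adjacent vertices give a geodesic of length 2 whose two inner points
  are told apart by its start; if \<open>g = 4\<close>, either some vertex has eccentricity at least 3,
  or one of two small configurations occurs, or the neighbourhood of a vertex of a 4-cycle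
  and its complement form a complete bipartition; if \<open>g \<ge> 5\<close> and \<open>C\<close> does not span the graph,
  a vertex adjacent to \<open>C\<close> can take over the role of a cycle vertex. The matching lower bounds
  come from twins in complete and complete bipartite graphs, and from the fact that every
  vertex of a cycle has two neighbours at the same distance from it.\<close>

definition cyc_dist :: "nat \<Rightarrow> nat \<Rightarrow> nat \<Rightarrow> nat" where
  "cyc_dist n i j = (if i \<le> j then min (j - i) (n - (j - i)) else min (i - j) (n - (i - j)))"

lemma cyc_dist_commute: "cyc_dist n i j = cyc_dist n j i"
  unfolding cyc_dist_def by auto

lemma cyc_dist_eq_1_imp_adjacent:
  "i < n \<Longrightarrow> j < n \<Longrightarrow> cyc_dist n i j = 1 \<Longrightarrow> j = Suc i mod n \<or> i = Suc j mod n"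
  unfolding cyc_dist_def min_def by (auto simp: mod_Suc split: if_splits)

lemma cyc_dist_0_le_2: "i < n \<Longrightarrow> cyc_dist n 0 i \<le> 2 \<Longrightarrow> i \<le> 2 \<or> n \<le> i + 2"
  unfolding cyc_dist_def by auto

lemma cyc_dist_0_eq_1: "i < n \<Longrightarrow> cyc_dist n 0 i = 1 \<Longrightarrow> i = 1 \<or> i = n - 1"
  unfolding cyc_dist_def by auto

lemma cyc_dist_resolving:
  assumes "3 \<le> n" "i < n" "j < n" "i \<noteq> j"
  shows "cyc_dist n 0 i \<noteq> cyc_dist n 0 j \<or> cyc_dist n 1 i \<noteq> cyc_dist n 1 j"
proof (rule ccontr)
  assume "\<not> ?thesis"
  then have from_0: "min i (n - i) = min j (n - j)" and from_1: "cyc_dist n 1 i = cyc_dist n 1 j"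
    by (auto simp: cyc_dist_def)
  from from_0 have "i + j = n"
    using assms by (auto simp: min_def split: if_splits)
  with from_1 show False
    using assms by (auto simp: cyc_dist_def min_def split: if_splits)
qed

lemma Suc_mod_eq_iff: "i < n \<Longrightarrow> j < n \<Longrightarrow> Suc i mod n = Suc j mod n \<longleftrightarrow> i = j"
  by (auto simp: mod_Suc split: if_splits)

lemma obtain_two_elements:
  assumes "2 \<le> card X" obtains u v where "u \<in> X" "v \<in> X" "u \<noteq> v"
  using assms by (metis card_2_iff' obtain_subset_with_card_n subset_iff)

lemma distinct_nth_mem_image_iff:
  "distinct c \<Longrightarrow> A \<subseteq> {..<length c} \<Longrightarrow> i < length c \<Longrightarrow> c ! i \<in> (!) c ` A \<longleftrightarrow> i \<in> A"
  by (auto simp: nth_eq_iff_index_eq subset_iff)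

definition triangle_free :: "('a \<Rightarrow> 'a \<Rightarrow> bool) \<Rightarrow> bool" where
  "triangle_free E \<longleftrightarrow> (\<forall>a b c. E a b \<longrightarrow> E b c \<longrightarrow> \<not> E c a)"

locale finite_simple_graph =
  fixes V :: "'a set" and E :: "'a \<Rightarrow> 'a \<Rightarrow> bool"
  assumes simple: "simple_graph V E"
begin

lemma finite_V: "finite V"
  using simple by (simp add: simple_graph_def)

lemma edge_in_V: "E x y \<Longrightarrow> x \<in> V" "E x y \<Longrightarrow> y \<in> V"
  using simple by (auto simp: simple_graph_def)

lemma edge_sym: "E x y \<Longrightarrow> E y x"
  using simple by (simp add: simple_graph_def)

lemma edge_irrefl: "\<not> E x x"
  using simple by (simp add: simple_graph_def)

lemma edge_neq: "E x y \<Longrightarrow> x \<noteq> y"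
  using edge_irrefl by auto

lemma cycle_length_ge_3: "is_cycle V E c \<Longrightarrow> 3 \<le> length c"
  by (simp add: is_cycle_def)

lemma cycle_nth_in_V: "is_cycle V E c \<Longrightarrow> i < length c \<Longrightarrow> c ! i \<in> V"
  unfolding is_cycle_def by (meson nth_mem subsetD)

lemma cycle_length_le_card: "is_cycle V E c \<Longrightarrow> length c \<le> card V"
  unfolding is_cycle_def by (metis card_mono distinct_card finite_V)

lemma cycle_edge: "is_cycle V E c \<Longrightarrow> i < length c \<Longrightarrow> E (c ! i) (c ! (Suc i mod length c))"
  unfolding is_cycle_def by blast

lemma cycle_edge_Suc: "is_cycle V E c \<Longrightarrow> Suc i < length c \<Longrightarrow> E (c ! i) (c ! Suc i)"
  using cycle_edge[of c i] by simp

lemma cycle_edge_last: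
  assumes "is_cycle V E c" shows "E (c ! (length c - 1)) (c ! 0)"
proof -
  have "0 < length c" using cycle_length_ge_3[OF assms] by linarith
  then show ?thesis using cycle_edge[OF assms, of "length c - 1"] by simp
qed

lemma girth_le: "is_cycle V E c \<Longrightarrow> girth V E \<le> length c"
  unfolding girth_def by (rule Least_le) blast

lemma obtain_girth_cycle:
  assumes "has_cycle V E"
  obtains c where "is_cycle V E c" "length c = girth V E"
  using LeastI_ex[of "\<lambda>k. \<exists>c. is_cycle V E c \<and> length c = k"] assms that
  unfolding girth_def has_cycle_def by blast

lemma girth_ge_3: "has_cycle V E \<Longrightarrow> 3 \<le> girth V E"
  by (rule obtain_girth_cycle) (auto simp: is_cycle_def)

lemma girth_le_card: "has_cycle V E \<Longrightarrow> girth V E \<le> card V"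
  by (rule obtain_girth_cycle) (auto dest: cycle_length_le_card)

lemma triangle_is_cycle:
  assumes "E a b" "E b c" "E c a"
  shows "is_cycle V E [a, b, c]"
  unfolding is_cycle_def
proof (intro conjI allI impI)
  show "distinct [a, b, c]"
    using edge_neq[OF assms(1)] edge_neq[OF assms(2)] edge_neq[OF assms(3)] by auto
  show "set [a, b, c] \<subseteq> V" using assms edge_in_V by auto
  fix i assume "i < length [a, b, c]"
  then have "i = 0 \<or> i = 1 \<or> i = 2" by auto
  then show "E ([a, b, c] ! i) ([a, b, c] ! (Suc i mod length [a, b, c]))" using assms by auto
qed simp

lemma square_is_cycle:
  assumes "E a b" "E b c" "E c e" "E e a" "a \<noteq> c" "b \<noteq> e"
  shows "is_cycle V E [a, b, c, e]"
  unfolding is_cycle_def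
proof (intro conjI allI impI)
  show "distinct [a, b, c, e]"
    using edge_neq[OF assms(1)] edge_neq[OF assms(2)] edge_neq[OF assms(3)] edge_neq[OF assms(4)]
      assms(5,6) by auto
  show "set [a, b, c, e] \<subseteq> V" using assms edge_in_V by auto
  fix i assume "i < length [a, b, c, e]"
  then have "i = 0 \<or> i = 1 \<or> i = 2 \<or> i = 3" by auto
  then show "E ([a, b, c, e] ! i) ([a, b, c, e] ! (Suc i mod length [a, b, c, e]))"
    using assms by auto
qed simp

lemma triangle_free_if_girth_ge_4:
  assumes "has_cycle V E" "4 \<le> girth V E"
  shows "triangle_free E"
  unfolding triangle_free_def
proof (intro allI impI notI)
  fix a b c assume "E a b" "E b c" "E c a"
  from girth_le[OF triangle_is_cycle[OF this]] show False using assms(2) by simp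
qed

lemma rotate_cycle:
  assumes c: "is_cycle V E c"
  shows "is_cycle V E (rotate m c)"
  unfolding is_cycle_def
proof (intro conjI allI impI)
  show "3 \<le> length (rotate m c)" "distinct (rotate m c)" "set (rotate m c) \<subseteq> V"
    using c by (auto simp: is_cycle_def)
  fix k assume k: "k < length (rotate m c)"
  have n0: "0 < length c" using cycle_length_ge_3[OF c] by linarith
  have "E (c ! ((m + k) mod length c)) (c ! (Suc ((m + k) mod length c) mod length c))"
    using cycle_edge[OF c] n0 by simp
  moreover have "Suc ((m + k) mod length c) mod length c = (m + Suc k mod length c) mod length c"
    by (simp add: mod_Suc_eq mod_add_right_eq)
  moreover have "Suc k mod length c < length c" using n0 by simp
  ultimately show "E (rotate m c ! k) (rotate m c ! (Suc k mod length (rotate m c)))"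
    using k by (simp add: nth_rotate)
qed

lemma graph_iso_complete_graph_iff:
  "graph_iso V E (fst (complete_graph (card V))) (snd (complete_graph (card V)))
     \<longleftrightarrow> (\<forall>x\<in>V. \<forall>y\<in>V. E x y \<longleftrightarrow> x \<noteq> y)"
proof
  assume "graph_iso V E (fst (complete_graph (card V))) (snd (complete_graph (card V)))"
  then obtain f where f: "bij_betw f V {0..<card V}"
    and e: "\<forall>x\<in>V. \<forall>y\<in>V. E x y \<longleftrightarrow> snd (complete_graph (card V)) (f x) (f y)"
    unfolding graph_iso_def complete_graph_def by auto
  show "\<forall>x\<in>V. \<forall>y\<in>V. E x y \<longleftrightarrow> x \<noteq> y"
  proof (intro ballI)
    fix x y assume "x \<in> V" "y \<in> V"
    moreover from this have "f x < card V" "f y < card V" "f x = f y \<longleftrightarrow> x = y"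
      using f by (auto simp: bij_betw_def inj_on_def)
    ultimately show "E x y \<longleftrightarrow> x \<noteq> y" using e by (auto simp: complete_graph_def)
  qed
next
  assume complete: "\<forall>x\<in>V. \<forall>y\<in>V. E x y \<longleftrightarrow> x \<noteq> y"
  obtain f where f: "bij_betw f V {0..<card V}" using ex_bij_betw_finite_nat[OF finite_V] by blast
  have "E x y \<longleftrightarrow> snd (complete_graph (card V)) (f x) (f y)" if "x \<in> V" "y \<in> V" for x y
    using that f complete by (auto simp: complete_graph_def bij_betw_def inj_on_def)
  then show "graph_iso V E (fst (complete_graph (card V))) (snd (complete_graph (card V)))"
    unfolding graph_iso_def using f by (auto simp: complete_graph_def)
qed

lemma graph_iso_complete_bipartite_sides:
  assumes "graph_iso V E (fst (complete_bipartite r s)) (snd (complete_bipartite r s))"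
  obtains B where "\<And>x y. x \<in> V \<Longrightarrow> y \<in> V \<Longrightarrow> E x y \<longleftrightarrow> (x \<in> B \<longleftrightarrow> y \<notin> B)"
proof -
  obtain f where f: "bij_betw f V (fst (complete_bipartite r s))"
    and e: "\<forall>x\<in>V. \<forall>y\<in>V. E x y \<longleftrightarrow> snd (complete_bipartite r s) (f x) (f y)"
    using assms unfolding graph_iso_def by auto
  have side: "f x \<in> {0..<r} \<times> {0} \<union> {0..<s} \<times> {1}" if "x \<in> V" for x
    using f that unfolding bij_betw_def complete_bipartite_def by auto
  show thesis
  proof (rule that[of "{x. snd (f x) = 1}"])
    fix x y assume "x \<in> V" "y \<in> V"
    then show "E x y \<longleftrightarrow> (x \<in> {x. snd (f x) = 1} \<longleftrightarrow> y \<notin> {x. snd (f x) = 1})"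
      using e side[of x] side[of y] by (cases "f x"; cases "f y") (auto simp: complete_bipartite_def)
  qed
qed

lemma graph_iso_complete_bipartite:
  assumes B: "B \<subseteq> V" and edges: "\<And>x y. x \<in> V \<Longrightarrow> y \<in> V \<Longrightarrow> E x y \<longleftrightarrow> (x \<in> B \<longleftrightarrow> y \<notin> B)"
  shows "graph_iso V E (fst (complete_bipartite (card (V - B)) (card B)))
    (snd (complete_bipartite (card (V - B)) (card B)))"
proof -
  let ?r = "card (V - B)" and ?s = "card B"
  have fin: "finite (V - B)" "finite B" using B finite_V finite_subset by auto
  obtain hA where hA: "bij_betw hA (V - B) {0..<?r}" using ex_bij_betw_finite_nat[OF fin(1)] by blast
  obtain hB where hB: "bij_betw hB B {0..<?s}" using ex_bij_betw_finite_nat[OF fin(2)] by blast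
  define f where "f x = (if x \<in> B then (hB x, 1::nat) else (hA x, 0))" for x
  have "bij_betw f (V - B) ({0..<?r} \<times> {0})"
    using bij_betw_cong[of "V - B" f "\<lambda>x. (hA x, 0)"] hA
    by (auto simp: f_def bij_betw_def inj_on_def)
  moreover have "bij_betw f B ({0..<?s} \<times> {1})"
    using bij_betw_cong[of B f "\<lambda>x. (hB x, 1)"] hB
    by (auto simp: f_def bij_betw_def inj_on_def)
  ultimately have "bij_betw f ((V - B) \<union> B) ({0..<?r} \<times> {0} \<union> {0..<?s} \<times> {1})"
    by (rule bij_betw_combine) auto
  then have bij: "bij_betw f V (fst (complete_bipartite ?r ?s))"
    using B by (simp add: complete_bipartite_def Un_absorb2)
  have "E x y \<longleftrightarrow> snd (complete_bipartite ?r ?s) (f x) (f y)" if "x \<in> V" "y \<in> V" for x y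
  proof -
    have "x \<in> B \<Longrightarrow> hB x < ?s" "x \<notin> B \<Longrightarrow> hA x < ?r"
      "y \<in> B \<Longrightarrow> hB y < ?s" "y \<notin> B \<Longrightarrow> hA y < ?r"
      using that hA hB by (auto simp: bij_betw_def)
    then show ?thesis using edges[OF that] by (auto simp: f_def complete_bipartite_def)
  qed
  then show ?thesis using bij unfolding graph_iso_def by blast
qed

lemma graph_iso_cycle_graph_edges:
  assumes "graph_iso V E (fst (cycle_graph (card V))) (snd (cycle_graph (card V)))"
  obtains f where "bij_betw f V {0..<card V}"
    "\<And>x y. x \<in> V \<Longrightarrow> y \<in> V \<Longrightarrow>
      E x y \<longleftrightarrow> f x \<noteq> f y \<and> (f y = Suc (f x) mod card V \<or> f x = Suc (f y) mod card V)"
proof -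
  obtain f where f: "bij_betw f V {0..<card V}"
    and e: "\<forall>x\<in>V. \<forall>y\<in>V. E x y \<longleftrightarrow> snd (cycle_graph (card V)) (f x) (f y)"
    using assms unfolding graph_iso_def cycle_graph_def by auto
  have "f x < card V" if "x \<in> V" for x using f that by (auto simp: bij_betw_def)
  then show thesis using that[OF f] e by (auto simp: cycle_graph_def)
qed

lemma graph_iso_cycle_graph_neighbours:
  assumes iso: "graph_iso V E (fst (cycle_graph (card V))) (snd (cycle_graph (card V)))"
    and n: "3 \<le> card V" and x: "x \<in> V"
  obtains u v where "u \<noteq> v" "E x u" "E x v" "\<And>w. E x w \<Longrightarrow> w = u \<or> w = v"
proof -
  let ?n = "card V"
  obtain f where f: "bij_betw f V {0..<?n}"
    and e: "\<And>x y. x \<in> V \<Longrightarrow> y \<in> V \<Longrightarrow>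
      E x y \<longleftrightarrow> f x \<noteq> f y \<and> (f y = Suc (f x) mod ?n \<or> f x = Suc (f y) mod ?n)"
    using graph_iso_cycle_graph_edges[OF iso] by blast
  define i where "i = f x"
  define p where "p = (if i = 0 then ?n - 1 else i - 1)"
  define q where "q = Suc i mod ?n"
  have i: "i < ?n" using f x by (auto simp: i_def bij_betw_def)
  have p: "p < ?n" "Suc p mod ?n = i" "p \<noteq> i" using i n by (auto simp: p_def mod_Suc)
  have q: "q < ?n" "q \<noteq> i" "q \<noteq> p" using i n by (auto simp: q_def p_def mod_Suc)
  have "q \<in> f ` V" "p \<in> f ` V" using f p(1) q(1) by (auto simp: bij_betw_def)
  then obtain u v where u: "u \<in> V" "f u = q" and v: "v \<in> V" "f v = p" by blast
  show thesis
  proof (rule that)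
    show "u \<noteq> v" using u v q(3) by auto
    show "E x u" using e[OF x u(1)] u q by (simp add: i_def q_def)
    show "E x v" using e[OF x v(1)] v p by (simp add: i_def)
    fix w assume w: "E x w"
    then have wV: "w \<in> V" by (rule edge_in_V)
    have "f w < ?n" using f wV by (auto simp: bij_betw_def)
    then have "f w = q \<or> f w = p"
      using e[OF x wV] w p Suc_mod_eq_iff[of "f w" ?n p] by (auto simp: i_def q_def)
    then show "w = u \<or> w = v"
      using f u v wV by (auto simp: bij_betw_def inj_on_def)
  qed
qed

lemma graph_iso_cycle_graph:
  assumes c: "is_cycle V E c" and spanning: "set c = V"
    and chordless: "\<And>i j. i < length c \<Longrightarrow> j < length c \<Longrightarrow> E (c ! i) (c ! j) \<Longrightarrow>
      j = Suc i mod length c \<or> i = Suc j mod length c"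
  shows "graph_iso V E (fst (cycle_graph (card V))) (snd (cycle_graph (card V)))"
proof -
  let ?g = "length c"
  have dist: "distinct c" using c by (simp add: is_cycle_def)
  have card: "card V = ?g" using spanning dist distinct_card by metis
  have bij: "bij_betw ((!) c) {..<?g} V" using bij_betw_nth[OF dist] spanning by simp
  let ?f = "inv_into {..<?g} ((!) c)"
  have "E (c ! i) (c ! j) \<longleftrightarrow> snd (cycle_graph ?g) i j" if "i < ?g" "j < ?g" for i j
    using that chordless[OF that] cycle_edge[OF c] edge_sym edge_irrefl
    by (auto simp: cycle_graph_def)
  then have "E x y \<longleftrightarrow> snd (cycle_graph ?g) (?f x) (?f y)" if "x \<in> V" "y \<in> V" for x y
    using that bij by (auto simp: bij_betw_def f_inv_into_f inv_into_into)
  moreover have "bij_betw ?f V (fst (cycle_graph ?g))"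
    using bij_betw_inv_into[OF bij] by (simp add: cycle_graph_def lessThan_atLeast0)
  ultimately show ?thesis using card unfolding graph_iso_def by auto
qed

text \<open>A walk of length \<open>L\<close> from \<open>x\<close> to \<open>y\<close>, indexed by \<open>0..L\<close>; easier to splice and reverse
  than the list-based walks of the definitions.\<close>

definition walk_fun :: "'a \<Rightarrow> 'a \<Rightarrow> nat \<Rightarrow> (nat \<Rightarrow> 'a) \<Rightarrow> bool" where
  "walk_fun x y L f \<longleftrightarrow> f 0 = x \<and> f L = y \<and> (\<forall>i\<le>L. f i \<in> V) \<and> (\<forall>i<L. E (f i) (f (Suc i)))"

lemma walk_fun_refl: "x \<in> V \<Longrightarrow> walk_fun x x 0 (\<lambda>_. x)"
  by (simp add: walk_fun_def)

lemma walk_fun_edge: "E x y \<Longrightarrow> walk_fun x y 1 (\<lambda>i. if i = 0 then x else y)"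
  by (auto simp: walk_fun_def edge_in_V)

lemma walk_fun_append:
  assumes f: "walk_fun x y L f" and g: "walk_fun y z M g"
  shows "walk_fun x z (L + M) (\<lambda>i. if i \<le> L then f i else g (i - L))"
  unfolding walk_fun_def
proof (intro conjI allI impI)
  show "(if 0 \<le> L then f 0 else g (0 - L)) = x" using f by (simp add: walk_fun_def)
  show "(if L + M \<le> L then f (L + M) else g (L + M - L)) = z"
    using f g by (cases M) (auto simp: walk_fun_def)
  show "(if i \<le> L then f i else g (i - L)) \<in> V" if "i \<le> L + M" for i
    using f g that by (auto simp: walk_fun_def)
  show "E (if i \<le> L then f i else g (i - L)) (if Suc i \<le> L then f (Suc i) else g (Suc i - L))"
    if "i < L + M" for i
  proof -
    consider "Suc i \<le> L" | "i = L" | "L < i" by linarith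
    then show ?thesis
    proof cases
      case 2
      then have "0 < M" using that by simp
      then have "E (g 0) (g (Suc 0))" using g unfolding walk_fun_def by blast
      then show ?thesis using f g 2 by (simp add: walk_fun_def)
    qed (use f g that in \<open>auto simp: walk_fun_def Suc_diff_le\<close>)
  qed
qed

lemma walk_fun_rev:
  assumes f: "walk_fun x y L f" shows "walk_fun y x L (\<lambda>i. f (L - i))"
  unfolding walk_fun_def
proof (intro conjI allI impI)
  show "f (L - 0) = y" "f (L - L) = x" "\<And>i. i \<le> L \<Longrightarrow> f (L - i) \<in> V"
    using f by (auto simp: walk_fun_def)
  show "E (f (L - i)) (f (L - Suc i))" if "i < L" for i
  proof -
    have "E (f (L - Suc i)) (f (Suc (L - Suc i)))" using f that by (auto simp: walk_fun_def)
    moreover have "Suc (L - Suc i) = L - i" using that by simp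
    ultimately show ?thesis using edge_sym by simp
  qed
qed

lemma walk_fun_take: "walk_fun x y L f \<Longrightarrow> k \<le> L \<Longrightarrow> walk_fun x (f k) k f"
  unfolding walk_fun_def by auto

lemma walk_fun_drop: "walk_fun x y L f \<Longrightarrow> k \<le> L \<Longrightarrow> walk_fun (f k) y (L - k) (\<lambda>i. f (k + i))"
  unfolding walk_fun_def by auto

lemma walk_fun_cycle:
  assumes c: "is_cycle V E c" and i: "i < length c"
  shows "walk_fun (c ! i) (c ! ((i + L) mod length c)) L (\<lambda>k. c ! ((i + k) mod length c))"
  unfolding walk_fun_def
proof (intro conjI allI impI)
  have n0: "0 < length c" using i by arith
  show "c ! ((i + 0) mod length c) = c ! i" using i by simp
  show "c ! ((i + k) mod length c) \<in> V" for k using cycle_nth_in_V[OF c] n0 by simp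
  show "E (c ! ((i + k) mod length c)) (c ! ((i + Suc k) mod length c))" for k
    using cycle_edge[OF c, of "(i + k) mod length c"] n0 by (simp add: mod_Suc_eq)
qed simp

lemma walk_fun_cycle_back:
  assumes c: "is_cycle V E c" and j: "j < length c"
  shows "walk_fun (c ! j) (c ! 0) j (\<lambda>k. c ! (j - k))"
  unfolding walk_fun_def
proof (intro conjI allI impI)
  show "c ! (j - k) \<in> V" for k using cycle_nth_in_V[OF c] j by simp
  show "E (c ! (j - k)) (c ! (j - Suc k))" if "k < j" for k
    using cycle_edge_Suc[OF c, of "j - Suc k"] that j edge_sym by (simp add: Suc_diff_Suc)
qed simp_all

text \<open>A closed walk that never immediately returns to the vertex it came from contains a cycle:
  between two occurrences of a vertex at minimal distance the walk visits distinct vertices.\<close>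

lemma closed_walk_fun_has_cycle:
  assumes f: "walk_fun x x L f" and L: "0 < L"
    and no_backtrack: "\<And>k. k + 2 \<le> L \<Longrightarrow> f k \<noteq> f (k + 2)"
  obtains c where "is_cycle V E c" "length c \<le> L"
proof -
  define repeats where "repeats \<delta> \<longleftrightarrow> 0 < \<delta> \<and> (\<exists>a. a + \<delta> \<le> L \<and> f a = f (a + \<delta>))" for \<delta>
  define \<delta> where "\<delta> = (LEAST \<delta>. repeats \<delta>)"
  have "repeats L" unfolding repeats_def using f L by (auto simp: walk_fun_def)
  then have "repeats \<delta>" "\<delta> \<le> L" unfolding \<delta>_def by (auto intro: LeastI Least_le)
  then obtain a where a: "a + \<delta> \<le> L" "f a = f (a + \<delta>)" "0 < \<delta>" by (auto simp: repeats_def)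
  have minimal: "\<not> repeats \<delta>'" if "\<delta>' < \<delta>" for \<delta>' using not_less_Least that \<delta>_def by blast
  have edge: "E (f (a + i)) (f (Suc (a + i)))" if "i < \<delta>" for i
    using f a that by (auto simp: walk_fun_def)
  have "\<delta> \<noteq> 1" using edge[of 0] a edge_irrefl by auto
  moreover have "\<delta> \<noteq> 2" using no_backtrack a by auto
  ultimately have \<delta>3: "3 \<le> \<delta>" using a by linarith
  define c where "c = map (\<lambda>i. f (a + i)) [0..<\<delta>]"
  have len: "length c = \<delta>" and nth: "\<And>i. i < \<delta> \<Longrightarrow> c ! i = f (a + i)" by (simp_all add: c_def)
  have "c ! i \<noteq> c ! j" if ij: "i < j" "j < \<delta>" for i j
  proof
    assume "c ! i = c ! j"
    then have "f (a + i) = f ((a + i) + (j - i))" using ij nth by simp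
    then have "repeats (j - i)" unfolding repeats_def using ij a(1) by (intro conjI exI[of _ "a + i"]) auto
    then show False using minimal ij by simp
  qed
  then have "distinct c" unfolding distinct_conv_nth len by (metis linorder_neqE_nat)
  moreover have "set c \<subseteq> V" using edge edge_in_V(1) by (force simp: c_def)
  moreover have "E (c ! i) (c ! (Suc i mod \<delta>))" if "i < \<delta>" for i
  proof (cases "Suc i < \<delta>")
    case False
    then have "Suc i = \<delta>" "a + \<delta> = Suc (a + i)" using that by simp_all
    then show ?thesis using edge[OF that] nth[OF that] nth[of 0] a by simp
  qed (use edge nth that in auto)
  ultimately have "is_cycle V E c" using \<delta>3 len by (simp add: is_cycle_def)
  then show thesis using that len a by simp
qed

end

locale connected_simple_graph = finite_simple_graph +
  assumes connected: "connected_graph V E"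
begin

abbreviation "d \<equiv> dist V E"

lemma dist_le_walk_fun:
  assumes "walk_fun x y L f" shows "d x y \<le> L"
proof -
  let ?p = "map f [0..<Suc L]"
  have "walk V E ?p" "hd ?p = x" "last ?p = y"
    using assms unfolding walk_def walk_fun_def
    by (auto simp del: upt_Suc simp: hd_map last_map)
  then show ?thesis unfolding dist_def by (intro Least_le) (rule exI[of _ ?p], simp)
qed

lemma obtain_shortest_walk_fun:
  assumes "x \<in> V" "y \<in> V"
  obtains f where "walk_fun x y (d x y) f"
proof -
  obtain p where "walk V E p" "hd p = x" "last p = y"
    using connected assms by (auto simp: connected_graph_def)
  then have "\<exists>k p. walk V E p \<and> hd p = x \<and> last p = y \<and> length p = Suc k"
    by (intro exI[of _ "length p - 1"] exI[of _ p]) (auto simp: walk_def)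
  then have "\<exists>p. walk V E p \<and> hd p = x \<and> last p = y \<and> length p = Suc (d x y)"
    unfolding dist_def by (rule LeastI_ex)
  then obtain q where q: "walk V E q" "hd q = x" "last q = y" "length q = Suc (d x y)" by blast
  have "walk_fun x y (d x y) ((!) q)" unfolding walk_fun_def
  proof (intro conjI allI impI)
    have "q \<noteq> []" using q(4) by auto
    then show "q ! 0 = x" "q ! d x y = y" using q by (auto simp: hd_conv_nth last_conv_nth)
    show "q ! i \<in> V" if "i \<le> d x y" for i
      using q(1,4) that unfolding walk_def by (metis le_imp_less_Suc nth_mem subsetD)
    show "E (q ! i) (q ! Suc i)" if "i < d x y" for i using q that unfolding walk_def by auto
  qed
  then show thesis by (rule that)
qed

lemma dist_self: "x \<in> V \<Longrightarrow> d x x = 0"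
  using dist_le_walk_fun[OF walk_fun_refl] by simp

lemma dist_commute:
  assumes "x \<in> V" "y \<in> V" shows "d x y = d y x"
proof -
  obtain f g where "walk_fun x y (d x y) f" "walk_fun y x (d y x) g"
    using obtain_shortest_walk_fun assms by metis
  from this[THEN walk_fun_rev, THEN dist_le_walk_fun] show ?thesis by simp
qed

lemma dist_eq_0_iff:
  assumes "x \<in> V" "y \<in> V" shows "d x y = 0 \<longleftrightarrow> x = y"
proof
  obtain f where "walk_fun x y (d x y) f" using obtain_shortest_walk_fun assms by blast
  then show "d x y = 0 \<Longrightarrow> x = y" unfolding walk_fun_def by metis
qed (use dist_self assms in simp)

lemma dist_eq_1_iff:
  assumes "x \<in> V" "y \<in> V" shows "d x y = 1 \<longleftrightarrow> E x y"
proof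
  obtain f where "walk_fun x y (d x y) f" using obtain_shortest_walk_fun assms by blast
  then show "d x y = 1 \<Longrightarrow> E x y" by (auto simp: walk_fun_def)
next
  assume e: "E x y"
  then have "d x y \<noteq> 0" using dist_eq_0_iff assms edge_neq by blast
  then show "d x y = 1" using dist_le_walk_fun[OF walk_fun_edge[OF e]] by simp
qed

lemma dist_le_2:
  assumes "E x w" "E w y" shows "d x y \<le> 2"
  using dist_le_walk_fun[OF walk_fun_append[OF walk_fun_edge[OF assms(1)] walk_fun_edge[OF assms(2)]]]
  by simp

lemma dist_eq_2_imp_common_neighbour:
  assumes "x \<in> V" "y \<in> V" "d x y = 2" obtains w where "E x w" "E w y"
proof -
  obtain f where "walk_fun x y (Suc (Suc 0)) f"
    using obtain_shortest_walk_fun assms by (metis numeral_2_eq_2)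
  then show thesis using that unfolding walk_fun_def by (metis lessI zero_less_Suc)
qed

lemma dist_shortest_walk_fun_prefix:
  assumes f: "walk_fun x y (d x y) f" and k: "k \<le> d x y"
  shows "d x (f k) = k"
proof -
  have "d x (f k) \<le> k" using dist_le_walk_fun[OF walk_fun_take[OF f k]] .
  moreover have "\<not> d x (f k) < k"
  proof
    assume lt: "d x (f k) < k"
    have "f k \<in> V" "x \<in> V" using f k by (auto simp: walk_fun_def)
    then obtain g where "walk_fun x (f k) (d x (f k)) g" using obtain_shortest_walk_fun by blast
    from dist_le_walk_fun[OF walk_fun_append[OF this walk_fun_drop[OF f k]]]
    show False using lt k by simp
  qed
  ultimately show ?thesis by simp
qed

lemma obtain_edge_leaving:
  assumes T: "T \<subseteq> V" "a \<in> T" "b \<in> V - T"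
  obtains x y where "x \<in> T" "y \<notin> T" "E x y"
proof -
  have ab: "a \<in> V" "b \<in> V" using T by auto
  obtain f where f: "walk_fun a b (d a b) f" using obtain_shortest_walk_fun[OF ab] by blast
  define K where "K = (LEAST k. f k \<notin> T)"
  have "f (d a b) \<notin> T" using f T by (simp add: walk_fun_def)
  then have K: "f K \<notin> T" "K \<le> d a b" unfolding K_def by (rule LeastI, rule Least_le)
  have "K \<noteq> 0"
  proof
    assume "K = 0"
    then show False using K(1) f T(2) by (simp add: walk_fun_def)
  qed
  have "K - 1 < d a b" using K(2) \<open>K \<noteq> 0\<close> by linarith
  then have "E (f (K - 1)) (f (Suc (K - 1)))" using f unfolding walk_fun_def by blast
  moreover have "f (K - 1) \<in> T" using not_less_Least[of "K - 1" "\<lambda>k. f k \<notin> T"] K_def \<open>K \<noteq> 0\<close> by auto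
  ultimately show thesis using K(1) \<open>K \<noteq> 0\<close> that by simp
qed

subsection \<open>Shortest cycles are isometric\<close>

lemma dist_cycle_le:
  assumes c: "is_cycle V E c" and ij: "i < length c" "j < length c"
  shows "d (c ! i) (c ! j) \<le> cyc_dist (length c) i j"
proof -
  let ?n = "length c"
  define k where "k = (if i \<le> j then j - i else ?n + j - i)"
  have k: "k < ?n" "(i + k) mod ?n = j" "(j + (?n - k)) mod ?n = i"
    "cyc_dist ?n i j = min k (?n - k)"
    using ij by (auto simp: k_def cyc_dist_def)
  have "d (c ! i) (c ! j) \<le> k"
    using dist_le_walk_fun[OF walk_fun_cycle[OF c ij(1), of k]] k by simp
  moreover have "d (c ! j) (c ! i) \<le> ?n - k"
    using dist_le_walk_fun[OF walk_fun_cycle[OF c ij(2), of "?n - k"]] k by simp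
  ultimately show ?thesis
    using k(4) dist_commute cycle_nth_in_V[OF c] ij by (simp add: min_def)
qed

text \<open>A geodesic from \<open>c ! 0\<close> to \<open>c ! j\<close> that is shorter than the arc, followed by the arc back,
  would be a closed walk without backtracking shorter than the girth.\<close>

lemma girth_cycle_no_shortcut:
  assumes c: "is_cycle V E c" "length c = girth V E"
    and j: "2 * j \<le> length c" "d (c ! 0) (c ! j) < j"
    and prev: "j - 1 \<le> d (c ! 0) (c ! (j - 1))"
  shows False
proof -
  let ?n = "length c"
  define L where "L = d (c ! 0) (c ! j)"
  have jn: "j < ?n" "0 < ?n" using j cycle_length_ge_3[OF c(1)] by linarith+
  have V: "c ! 0 \<in> V" "c ! j \<in> V" using cycle_nth_in_V[OF c(1)] jn by auto
  have "c ! 0 \<noteq> c ! j"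
    using c(1) jn j(2) by (auto simp: is_cycle_def nth_eq_iff_index_eq)
  then have L0: "0 < L" using dist_eq_0_iff[OF V] by (simp add: L_def)
  obtain P where P: "walk_fun (c ! 0) (c ! j) L P"
    using obtain_shortest_walk_fun[OF V] L_def by blast
  have geo: "d (c ! 0) (P k) = k" if "k \<le> L" for k
    using dist_shortest_walk_fun_prefix[OF P[unfolded L_def]] that L_def by simp
  define R where "R k = (if k \<le> L then P k else c ! (j - (k - L)))" for k
  have R: "walk_fun (c ! 0) (c ! 0) (L + j) R"
    unfolding R_def by (rule walk_fun_append[OF P walk_fun_cycle_back[OF c(1) jn(1)]])
  have "R k \<noteq> R (k + 2)" if k: "k + 2 \<le> L + j" for k
  proof -
    consider "k + 2 \<le> L" | "k + 1 = L" | "L \<le> k" by linarith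
    then show ?thesis
    proof cases
      case 1
      then show ?thesis using geo[of k] geo[of "k + 2"] by (auto simp: R_def)
    next
      case 2
      then have "R k = P k" "R (k + 2) = c ! (j - 1)" "d (c ! 0) (P k) = k"
        using geo[of k] by (auto simp: R_def)
      then show ?thesis using prev 2 j(2) L_def by auto
    next
      case 3
      then have "R k = c ! (j - (k - L))" "R (k + 2) = c ! (j - (k + 2 - L))"
        using P L0 by (auto simp: R_def walk_fun_def)
      moreover have "j - (k - L) \<noteq> j - (k + 2 - L)" using 3 k by linarith
      ultimately show ?thesis using c(1) jn by (auto simp: is_cycle_def nth_eq_iff_index_eq)
    qed
  qed
  then obtain cy where "is_cycle V E cy" "length cy \<le> L + j"
    using closed_walk_fun_has_cycle[OF R] L0 by auto
  then show False using girth_le c(2) j L_def by fastforce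
qed

lemma dist_girth_cycle_0_ge:
  assumes c: "is_cycle V E c" "length c = girth V E" and j: "2 * j \<le> length c"
  shows "j \<le> d (c ! 0) (c ! j)"
  using j
proof (induction j)
  case (Suc j)
  then have "j \<le> d (c ! 0) (c ! j)" by simp
  then show ?case using girth_cycle_no_shortcut[OF c Suc.prems] by (cases "Suc j \<le> d (c ! 0) (c ! Suc j)") auto
qed simp

lemma dist_girth_cycle:
  assumes c: "is_cycle V E c" "length c = girth V E" and ij: "i < length c" "j < length c"
  shows "d (c ! i) (c ! j) = cyc_dist (length c) i j"
proof -
  let ?n = "length c"
  define k where "k = (if i \<le> j then j - i else ?n + j - i)"
  have k: "k < ?n" "(i + k) mod ?n = j" "(j + (?n - k)) mod ?n = i"
    "cyc_dist ?n i j = min k (?n - k)"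
    using ij by (auto simp: k_def cyc_dist_def)
  have rot_nth: "rotate m c ! l = c ! ((m + l) mod ?n)" if "l < ?n" for m l
    using that by (simp add: nth_rotate)
  have rot: "is_cycle V E (rotate m c)" "length (rotate m c) = girth V E" for m
    using c rotate_cycle by auto
  have "c \<noteq> []" using ij by auto
  have "min k (?n - k) \<le> d (c ! i) (c ! j)"
  proof (cases "2 * k \<le> ?n")
    case True
    then show ?thesis using dist_girth_cycle_0_ge[OF rot[of i], of k] rot_nth[of 0 i] rot_nth[of k i] k ij \<open>c \<noteq> []\<close>
      by simp
  next
    case False
    then have "?n - k \<le> d (c ! j) (c ! i)"
      using dist_girth_cycle_0_ge[OF rot[of j], of "?n - k"] rot_nth[of 0 j] rot_nth[of "?n - k" j] k ij \<open>c \<noteq> []\<close>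
      by simp
    then show ?thesis using dist_commute cycle_nth_in_V[OF c(1)] ij by simp
  qed
  then show ?thesis using dist_cycle_le[OF c(1) ij] k(4) by linarith
qed

lemma resolving_set_V: "resolving_set V E V"
  unfolding resolving_set_def
proof (intro conjI ballI impI)
  fix u v assume uv: "u \<in> V" "v \<in> V" "u \<noteq> v"
  then have "d u u \<noteq> d v u" using dist_self[of u] dist_eq_0_iff[of v u] by simp
  then show "\<exists>w\<in>V. d u w \<noteq> d v w" using uv(1) by blast
qed simp

lemma metric_dim_le: "resolving_set V E W \<Longrightarrow> metric_dim V E \<le> card W"
  unfolding metric_dim_def by (rule Least_le) blast

lemma obtain_metric_basis:
  obtains W where "resolving_set V E W" "card W = metric_dim V E"
proof -
  have "\<exists>W. resolving_set V E W \<and> card W = metric_dim V E"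
    unfolding metric_dim_def by (rule LeastI_ex) (use resolving_set_V in blast)
  then show thesis using that by blast
qed

lemma le_metric_dim: "(\<And>W. resolving_set V E W \<Longrightarrow> m \<le> card W) \<Longrightarrow> m \<le> metric_dim V E"
  by (metis obtain_metric_basis)

text \<open>Vertices outside \<open>S\<close> are resolved by themselves, since only they are at distance \<open>0\<close>.\<close>

lemma metric_dim_le_card_Diff:
  assumes S: "S \<subseteq> V"
    and resolved: "\<And>u v. u \<in> S \<Longrightarrow> v \<in> S \<Longrightarrow> u \<noteq> v \<Longrightarrow> \<exists>w\<in>V - S. d u w \<noteq> d v w"
  shows "metric_dim V E \<le> card V - card S"
proof -
  have "resolving_set V E (V - S)" unfolding resolving_set_def
  proof (intro conjI ballI impI)
    fix u v assume uv: "u \<in> V" "v \<in> V" "u \<noteq> v"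
    have self: "d u u \<noteq> d v u" "d u v \<noteq> d v v"
      using uv dist_self[of u] dist_self[of v] dist_eq_0_iff[of v u] dist_eq_0_iff[of u v] by auto
    consider "u \<in> S" "v \<in> S" | "u \<notin> S" | "v \<notin> S" by blast
    then show "\<exists>w\<in>V - S. d u w \<noteq> d v w"
    proof cases
      case 2 then show ?thesis using self(1) uv(1) by blast
    next
      case 3 then show ?thesis using self(2) uv(2) by blast
    qed (use resolved uv in blast)
  qed auto
  then have "metric_dim V E \<le> card (V - S)" by (rule metric_dim_le)
  then show ?thesis using S finite_V by (simp add: card_Diff_subset finite_subset)
qed

lemma metric_dim_le_of_inj_dist:
  assumes S: "S \<subseteq> V" and w: "w \<in> V - S" and inj: "inj_on (\<lambda>u. d u w) S"
  shows "metric_dim V E \<le> card V - card S"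
proof (rule metric_dim_le_card_Diff[OF S])
  fix u v assume "u \<in> S" "v \<in> S" "u \<noteq> v"
  then have "d u w \<noteq> d v w" using inj by (auto dest: inj_onD)
  then show "\<exists>w\<in>V - S. d u w \<noteq> d v w" using w by blast
qed

text \<open>The first \<open>k\<close> inner vertices of a geodesic are resolved by its start.\<close>

lemma metric_dim_le_of_dist:
  assumes xy: "x \<in> V" "y \<in> V" and k: "k \<le> d x y"
  shows "metric_dim V E \<le> card V - k"
proof -
  obtain f where f: "walk_fun x y (d x y) f" using obtain_shortest_walk_fun[OF xy] by blast
  have dist_f: "d (f i) x = i" if "i \<le> k" for i
  proof -
    have "f i \<in> V" using f that k unfolding walk_fun_def by simp
    then have "d (f i) x = d x (f i)" using dist_commute xy(1) by blast
    then show ?thesis using dist_shortest_walk_fun_prefix[OF f] that k by simp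
  qed
  have "inj_on f {1..k}"
  proof (rule inj_onI)
    fix i j assume ij: "i \<in> {1..k}" "j \<in> {1..k}" "f i = f j"
    have "i = d (f i) x" using dist_f ij(1) by simp
    also have "\<dots> = j" using dist_f ij(2,3) by simp
    finally show "i = j" .
  qed
  then have card: "card (f ` {1..k}) = k" by (simp add: card_image)
  have "inj_on ((\<lambda>u. d u x) \<circ> f) {1..k}" by (rule inj_onI) (simp add: dist_f)
  then have inj: "inj_on (\<lambda>u. d u x) (f ` {1..k})" by (rule inj_on_imageI)
  have sub: "f ` {1..k} \<subseteq> V" using f k unfolding walk_fun_def by force
  have "x \<notin> f ` {1..k}"
  proof
    assume "x \<in> f ` {1..k}"
    then obtain i where "i \<in> {1..k}" "f i = x" by blast
    then show False using dist_f[of i] dist_self[OF xy(1)] by simp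
  qed
  then have "x \<in> V - f ` {1..k}" using xy(1) by blast
  from metric_dim_le_of_inj_dist[OF sub this inj] show ?thesis using card by simp
qed
lemma card_Diff_resolving_set:
  assumes "resolving_set V E W" shows "card (V - W) = card V - card W"
proof -
  have "W \<subseteq> V" using assms by (simp add: resolving_set_def)
  then show ?thesis using finite_V by (simp add: card_Diff_subset finite_subset)
qed

definition twins :: "'a \<Rightarrow> 'a \<Rightarrow> bool" where
  "twins u v \<longleftrightarrow> (\<forall>z. z \<noteq> u \<longrightarrow> z \<noteq> v \<longrightarrow> E u z \<longleftrightarrow> E v z)"

lemma twinsI:
  assumes "\<And>z. z \<in> V \<Longrightarrow> z \<noteq> u \<Longrightarrow> z \<noteq> v \<Longrightarrow> E u z \<longleftrightarrow> E v z"
  shows "twins u v"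
  unfolding twins_def
proof (intro allI impI)
  fix z assume "z \<noteq> u" "z \<noteq> v"
  show "E u z \<longleftrightarrow> E v z"
  proof (cases "z \<in> V")
    case True
    then show ?thesis using assms \<open>z \<noteq> u\<close> \<open>z \<noteq> v\<close> by blast
  next
    case False
    then show ?thesis using edge_in_V(2) by blast
  qed
qed

lemma twins_dist_le:
  assumes uv: "u \<in> V" "v \<in> V" "twins u v" and w: "w \<in> V" "w \<noteq> u" "w \<noteq> v"
  shows "d v w \<le> d u w"
proof -
  obtain f where f: "walk_fun u w (d u w) f" using obtain_shortest_walk_fun uv w by blast
  have L0: "0 < d u w" using dist_eq_0_iff uv w by auto
  then have e: "E u (f 1)" using f unfolding walk_fun_def by (metis One_nat_def)
  have rest: "walk_fun (f 1) w (d u w - 1) (\<lambda>i. f (1 + i))" using walk_fun_drop[OF f, of 1] L0 by simp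
  show ?thesis
  proof (cases "f 1 = v")
    case True
    then show ?thesis using dist_le_walk_fun[OF rest] by simp
  next
    case False
    then have "E v (f 1)" using uv(3) e edge_neq[OF e] by (auto simp: twins_def)
    from dist_le_walk_fun[OF walk_fun_append[OF walk_fun_edge[OF this] rest]] show ?thesis
      using L0 by simp
  qed
qed

lemma twins_not_resolved:
  assumes "resolving_set V E W" "u \<in> V - W" "v \<in> V - W" "twins u v"
  shows "u = v"
proof (rule ccontr)
  assume "u \<noteq> v"
  then obtain w where w: "w \<in> W" "d u w \<noteq> d v w" "W \<subseteq> V"
    using assms unfolding resolving_set_def by blast
  have "twins v u" using assms(4) by (auto simp: twins_def)
  then have "d v w \<le> d u w" "d u w \<le> d v w"
    using twins_dist_le w assms(2-4) by (metis DiffE subsetD)+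
  then show False using w(2) by simp
qed

subsection \<open>The upper bound \<open>n - g + 2\<close>\<close>

lemma girth_cycle_resolved_by_first_two:
  assumes c: "is_cycle V E c" "length c = girth V E"
    and ij: "i < length c" "j < length c" "i \<noteq> j"
  shows "d (c ! i) (c ! 0) \<noteq> d (c ! j) (c ! 0) \<or> d (c ! i) (c ! 1) \<noteq> d (c ! j) (c ! 1)"
proof -
  have g: "3 \<le> length c" using cycle_length_ge_3[OF c(1)] .
  then have "d (c ! k) (c ! l) = cyc_dist (length c) l k" if "k < length c" "l \<le> 1" for k l
    using dist_girth_cycle[OF c] that cyc_dist_commute by simp
  then show ?thesis using cyc_dist_resolving[OF g ij] ij by simp
qed

lemma metric_dim_le_card_minus_girth:
  assumes "has_cycle V E"
  shows "metric_dim V E \<le> card V - girth V E + 2"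
proof -
  obtain c where c: "is_cycle V E c" "length c = girth V E" using obtain_girth_cycle assms by blast
  let ?g = "length c" and ?S = "(!) c ` {2..<length c}"
  have dist: "distinct c" and g: "3 \<le> ?g" using c(1) by (simp_all add: is_cycle_def)
  have card: "card ?S = ?g - 2" using card_image[OF inj_on_nth[OF dist]] by simp
  have "0 < ?g" "1 < ?g" "{2..<?g} \<subseteq> {..<?g}" using g by auto
  then have outside: "c ! 0 \<in> V - ?S" "c ! 1 \<in> V - ?S"
    using distinct_nth_mem_image_iff[OF dist] cycle_nth_in_V[OF c(1)] by auto
  have "metric_dim V E \<le> card V - card ?S"
  proof (rule metric_dim_le_card_Diff)
    show "?S \<subseteq> V" using cycle_nth_in_V[OF c(1)] by auto
    fix u v assume "u \<in> ?S" "v \<in> ?S" "u \<noteq> v"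
    then obtain i j where "i < ?g" "j < ?g" "i \<noteq> j" "u = c ! i" "v = c ! j" by force
    then show "\<exists>w\<in>V - ?S. d u w \<noteq> d v w"
      using girth_cycle_resolved_by_first_two[OF c] outside by blast
  qed
  then show ?thesis using card c cycle_length_le_card[OF c(1)] by linarith
qed

subsection \<open>Graphs of girth at least five\<close>

lemma spanning_girth_cycle_iso:
  assumes c: "is_cycle V E c" "length c = girth V E" and spanning: "set c = V"
  shows "graph_iso V E (fst (cycle_graph (card V))) (snd (cycle_graph (card V)))"
proof (rule graph_iso_cycle_graph[OF c(1) spanning])
  fix i j assume ij: "i < length c" "j < length c" and "E (c ! i) (c ! j)"
  then have "d (c ! i) (c ! j) = 1" using dist_eq_1_iff cycle_nth_in_V[OF c(1)] by blast
  then show "j = Suc i mod length c \<or> i = Suc j mod length c"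
    using dist_girth_cycle[OF c ij] cyc_dist_eq_1_imp_adjacent ij by simp
qed

lemma dist_to_leaf:
  assumes e: "E x y" and leaf: "\<And>z. E x z \<Longrightarrow> z = y" and v: "v \<in> V" "v \<noteq> x"
  shows "d v x = d v y + 1"
proof -
  have xy: "x \<in> V" "y \<in> V" using e edge_in_V by auto
  obtain f where "walk_fun v y (d v y) f" using obtain_shortest_walk_fun v xy by blast
  from dist_le_walk_fun[OF walk_fun_append[OF this walk_fun_edge[OF edge_sym[OF e]]]]
  have le: "d v x \<le> d v y + 1" by simp
  obtain g where g: "walk_fun x v (d x v) g" using obtain_shortest_walk_fun v xy by blast
  have L0: "0 < d x v" using dist_eq_0_iff v xy by auto
  then have "E x (g 1)" using g unfolding walk_fun_def by (metis One_nat_def)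
  then have "g 1 = y" by (rule leaf)
  then have "walk_fun y v (d x v - 1) (\<lambda>i. g (1 + i))" using walk_fun_drop[OF g, of 1] L0 by simp
  then have "d y v \<le> d x v - 1" by (rule dist_le_walk_fun)
  then show ?thesis using le L0 dist_commute v xy by simp
qed

text \<open>Distances to a leaf at \<open>c ! 0\<close> exceed those to \<open>c ! 0\<close> by one, so the leaf can replace
  \<open>c ! 0\<close> as a landmark.\<close>

lemma metric_dim_le_of_leaf_at_girth_cycle:
  assumes c: "is_cycle V E c" "length c = girth V E"
    and x: "E (c ! 0) x" "x \<notin> set c" and leaf: "\<And>z. E x z \<Longrightarrow> z = c ! 0"
  shows "metric_dim V E \<le> card V - girth V E + 1"
proof -
  let ?g = "length c" and ?S = "(!) c ` ({..<length c} - {1})"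
  have dist: "distinct c" and g: "3 \<le> ?g" using c(1) by (simp_all add: is_cycle_def)
  have card: "card ?S = ?g - 1" using card_image[OF inj_on_nth[OF dist]] g by simp
  have "1 < ?g" "{..<?g} - {1} \<subseteq> {..<?g}" using g by auto
  then have outside: "c ! 1 \<in> V - ?S" "x \<in> V - ?S"
    using distinct_nth_mem_image_iff[OF dist] cycle_nth_in_V[OF c(1)] x edge_in_V by auto
  have to_leaf: "d (c ! i) x = d (c ! i) (c ! 0) + 1" if "i < ?g" for i
  proof -
    have "c ! i \<noteq> x" using x(2) that by auto
    then show ?thesis using dist_to_leaf[OF edge_sym[OF x(1)] leaf] cycle_nth_in_V[OF c(1) that] by simp
  qed
  have "metric_dim V E \<le> card V - card ?S"
  proof (rule metric_dim_le_card_Diff)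
    show "?S \<subseteq> V" using cycle_nth_in_V[OF c(1)] by auto
    fix u v assume "u \<in> ?S" "v \<in> ?S" "u \<noteq> v"
    then obtain i j where "i < ?g" "j < ?g" "i \<noteq> j" "u = c ! i" "v = c ! j" by force
    then show "\<exists>w\<in>V - ?S. d u w \<noteq> d v w"
      using girth_cycle_resolved_by_first_two[OF c] outside to_leaf by (metis add_right_cancel)
  qed
  then show ?thesis using card c cycle_length_le_card[OF c(1)] by linarith
qed

lemma girth_cycle_dist_0_le_2:
  assumes c: "is_cycle V E c" "length c = girth V E"
    and j: "j < length c" "j \<noteq> 0" "d (c ! 0) (c ! j) \<le> 2"
  shows "j = 1 \<or> j = 2 \<or> j = length c - 1 \<or> j = length c - 2"
proof -
  have "c \<noteq> []" using j(1) by auto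
  then have "cyc_dist (length c) 0 j \<le> 2" using dist_girth_cycle[OF c, of 0 j] j by simp
  then show ?thesis using cyc_dist_0_le_2[OF j(1)] j(1,2) by auto
qed

lemma girth_cycle_attachment_unique:
  assumes c: "is_cycle V E c" "length c = girth V E" and g5: "5 \<le> length c"
    and x: "E (c ! 0) x" "x \<notin> set c" and j: "j < length c" "E x (c ! j)"
  shows "j = 0"
proof (rule ccontr)
  assume "j \<noteq> 0"
  let ?g = "length c"
  have no_short_cycle: "\<not> is_cycle V E cy" if "length cy \<le> 4" for cy
    using girth_le[of cy] that g5 c(2) by auto
  have cne: "c \<noteq> []" using j(1) by auto
  have "j = 1 \<or> j = 2 \<or> j = ?g - 1 \<or> j = ?g - 2"
    using girth_cycle_dist_0_le_2[OF c j(1) \<open>j \<noteq> 0\<close> dist_le_2[OF x(1) j(2)]] .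
  then consider "j = 1" | "j = 2" | "j = ?g - 1" | "j = ?g - 2" by blast
  then show False
  proof cases
    case 1
    then have "is_cycle V E [x, c ! 0, c ! 1]"
      using x(1) j(2) cycle_edge_Suc[OF c(1), of 0] g5 edge_sym by (intro triangle_is_cycle) auto
    then show False using no_short_cycle by simp
  next
    case 2
    have "x \<noteq> c ! 1" "c ! 0 \<noteq> c ! 2"
      using x(2) c(1) g5 cne nth_eq_iff_index_eq[of c 0 2] by (auto simp: is_cycle_def)
    then have "is_cycle V E [x, c ! 0, c ! 1, c ! 2]"
      using 2 x(1) j(2) cycle_edge_Suc[OF c(1), of 0] cycle_edge_Suc[OF c(1), of 1] g5 edge_sym
      by (intro square_is_cycle) (auto simp: numeral_2_eq_2)
    then show False using no_short_cycle by simp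
  next
    case 3
    then have "is_cycle V E [x, c ! (?g - 1), c ! 0]"
      using x(1) j(2) cycle_edge_last[OF c(1)] edge_sym by (intro triangle_is_cycle) auto
    then show False using no_short_cycle by simp
  next
    case 4
    have "x \<noteq> c ! (?g - 1)" "c ! (?g - 2) \<noteq> c ! 0"
      using x(2) c(1) g5 cne nth_eq_iff_index_eq[of c "?g - 2" 0] by (auto simp: is_cycle_def)
    moreover have "E (c ! (?g - 2)) (c ! (?g - 1))"
      using cycle_edge_Suc[OF c(1), of "?g - 2"] g5 by (simp add: Suc_diff_Suc numeral_2_eq_2)
    ultimately have "is_cycle V E [x, c ! (?g - 2), c ! (?g - 1), c ! 0]"
      using 4 x(1) j(2) cycle_edge_last[OF c(1)] edge_sym by (intro square_is_cycle) auto
    then show False using no_short_cycle by simp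
  qed
qed

lemma girth_cycle_branch_resolves:
  assumes c: "is_cycle V E c" "length c = girth V E" and g5: "5 \<le> length c"
    and x: "E (c ! 0) x" "x \<notin> set c" and z: "E x z" "z \<noteq> c ! 0"
    and i: "2 \<le> i" "i < length c"
  shows "d x (c ! 0) \<noteq> d (c ! i) (c ! 0) \<or> d x z \<noteq> d (c ! i) z"
proof (cases "i = length c - 1")
  case True
  have "\<not> E (c ! i) z"
  proof
    assume "E (c ! i) z"
    moreover have "x \<noteq> c ! i" using x(2) i by auto
    ultimately have "is_cycle V E [x, c ! 0, c ! i, z]"
      using x(1) z cycle_edge_last[OF c(1)] True edge_sym by (intro square_is_cycle) auto
    then show False using girth_le c(2) g5 by fastforce
  qed
  then show ?thesis
    using z(1) dist_eq_1_iff edge_in_V cycle_nth_in_V[OF c(1) i(2)] by metis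
next
  case False
  have "c \<noteq> []" using i by auto
  then have "d (c ! i) (c ! 0) \<noteq> 1"
    using dist_girth_cycle[OF c i(2), of 0] cyc_dist_0_eq_1[OF i(2)] cyc_dist_commute i False
    by auto
  then show ?thesis using x(1) edge_sym dist_eq_1_iff edge_in_V by metis
qed

lemma metric_dim_le_of_branch_at_girth_cycle:
  assumes c: "is_cycle V E c" "length c = girth V E" and g5: "5 \<le> length c"
    and x: "E (c ! 0) x" "x \<notin> set c" and z: "E x z" "z \<noteq> c ! 0"
  shows "metric_dim V E \<le> card V - girth V E + 1"
proof -
  let ?g = "length c" and ?S = "insert x ((!) c ` {2..<length c})"
  have dist: "distinct c" using c(1) by (simp add: is_cycle_def)
  have "card ((!) c ` {2..<?g}) = ?g - 2" using card_image[OF inj_on_nth[OF dist]] by simp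
  moreover have "x \<notin> (!) c ` {2..<?g}" using x(2) by auto
  ultimately have card: "card ?S = ?g - 1" using g5 by simp
  have "z \<notin> set c"
  proof
    assume "z \<in> set c"
    then obtain j where "j < ?g" "z = c ! j" by (auto simp: in_set_conv_nth)
    then show False using girth_cycle_attachment_unique[OF c g5 x] z by auto
  qed
  moreover have "0 < ?g" "1 < ?g" "{2..<?g} \<subseteq> {..<?g}" using g5 by auto
  ultimately have outside: "c ! 0 \<in> V - ?S" "c ! 1 \<in> V - ?S" "z \<in> V - ?S"
    using distinct_nth_mem_image_iff[OF dist] cycle_nth_in_V[OF c(1)] x z edge_in_V edge_irrefl
    by auto
  have "metric_dim V E \<le> card V - card ?S"
  proof (rule metric_dim_le_card_Diff)
    show "?S \<subseteq> V" using cycle_nth_in_V[OF c(1)] x edge_in_V by auto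
    fix u v assume uv: "u \<in> ?S" "v \<in> ?S" "u \<noteq> v"
    consider "u = x" | "v = x" | "u \<noteq> x" "v \<noteq> x" by blast
    then show "\<exists>w\<in>V - ?S. d u w \<noteq> d v w"
    proof cases
      case 1
      then obtain i where "2 \<le> i" "i < ?g" "v = c ! i" using uv by auto
      then show ?thesis using girth_cycle_branch_resolves[OF c g5 x z] outside 1 by blast
    next
      case 2
      then obtain i where "2 \<le> i" "i < ?g" "u = c ! i" using uv by auto
      then show ?thesis using girth_cycle_branch_resolves[OF c g5 x z] outside 2 by metis
    next
      case 3
      then obtain i j where "i < ?g" "j < ?g" "i \<noteq> j" "u = c ! i" "v = c ! j" using uv by force
      then show ?thesis using girth_cycle_resolved_by_first_two[OF c] outside by blast
    qed
  qed
  then show ?thesis using card c cycle_length_le_card[OF c(1)] by linarith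
qed

lemma metric_dim_girth_ge_5:
  assumes "has_cycle V E" "5 \<le> girth V E"
  shows "metric_dim V E \<le> card V - girth V E + 1
    \<or> graph_iso V E (fst (cycle_graph (card V))) (snd (cycle_graph (card V)))"
proof -
  obtain c where c: "is_cycle V E c" "length c = girth V E" using obtain_girth_cycle assms(1) by blast
  have "c \<noteq> []" "set c \<subseteq> V" using c(1) by (auto simp: is_cycle_def)
  show ?thesis
  proof (cases "set c = V")
    case True
    then show ?thesis using spanning_girth_cycle_iso[OF c] by blast
  next
    case False
    then obtain b where "b \<in> V - set c" using \<open>set c \<subseteq> V\<close> by blast
    then obtain y x where "y \<in> set c" "x \<notin> set c" "E y x"
      using obtain_edge_leaving[OF \<open>set c \<subseteq> V\<close>, of "c ! 0"] \<open>c \<noteq> []\<close> by auto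
    then obtain i where i: "i < length c" "c ! i = y" "x \<notin> set c" "E y x"
      by (auto simp: in_set_conv_nth)
    let ?c = "rotate i c"
    have c': "is_cycle V E ?c" "length ?c = girth V E" using rotate_cycle[OF c(1)] c(2) by auto
    have x: "E (?c ! 0) x" "x \<notin> set ?c" using i \<open>c \<noteq> []\<close> by (auto simp: nth_rotate)
    show ?thesis
    proof (cases "\<forall>z. E x z \<longrightarrow> z = ?c ! 0")
      case True
      then show ?thesis using metric_dim_le_of_leaf_at_girth_cycle[OF c' x] by blast
    next
      case False
      then show ?thesis
        using metric_dim_le_of_branch_at_girth_cycle[OF c' _ x] c' assms(2) by auto
    qed
  qed
qed

subsection \<open>Graphs of girth three and four\<close>

lemma metric_dim_le_of_non_edge:
  assumes "x \<in> V" "y \<in> V" "x \<noteq> y" "\<not> E x y"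
  shows "metric_dim V E \<le> card V - 2"
proof -
  have "d x y \<noteq> 0" "d x y \<noteq> 1" using assms dist_eq_0_iff dist_eq_1_iff by auto
  then show ?thesis using metric_dim_le_of_dist[OF assms(1,2), of 2] by simp
qed

lemma dist_eq_2_of_radius_2:
  assumes "x0 \<in> V" "\<forall>v\<in>V. d x0 v \<le> 2" "a \<in> V" "a \<noteq> x0" "\<not> E x0 a"
  shows "d x0 a = 2"
  using assms dist_eq_0_iff[of x0 a] dist_eq_1_iff[of x0 a] by fastforce

lemma metric_dim_le_of_edge_outside_neighbourhood:
  assumes tf: "triangle_free E" and x0: "x0 \<in> V" "\<forall>v\<in>V. d x0 v \<le> 2"
    and a: "\<not> E x0 a" "\<not> E x0 a'" "E a a'"
  shows "metric_dim V E \<le> card V - 3"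
proof -
  have V: "a \<in> V" "a' \<in> V" using a(3) edge_in_V by auto
  have ne: "a \<noteq> x0" "a' \<noteq> x0" using a edge_sym by auto
  then obtain b b' where b: "E x0 b" "E b a" and b': "E x0 b'" "E b' a'"
    using dist_eq_2_of_radius_2[OF x0] dist_eq_2_imp_common_neighbour x0(1) V a(1,2) by metis
  have "\<not> E a b'" "b \<noteq> b'" using tf a(3) b b' edge_sym unfolding triangle_free_def by metis+
  then have dist_b': "d a b' \<noteq> d a' b'"
    using b'(2) dist_eq_1_iff V edge_in_V edge_sym by metis
  have dist_x0: "d b x0 \<noteq> d a x0" "d b x0 \<noteq> d a' x0"
    using a(1,2) b(1) dist_eq_1_iff V x0(1) edge_in_V edge_sym by metis+
  have distinct: "b \<noteq> a" "b \<noteq> a'" "a \<noteq> a'" using a b(1) edge_neq[OF a(3)] by auto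
  have "metric_dim V E \<le> card V - card {b, a, a'}"
  proof (rule metric_dim_le_card_Diff)
    show "{b, a, a'} \<subseteq> V" using V b edge_in_V by auto
    have w: "x0 \<in> V - {b, a, a'}" "b' \<in> V - {b, a, a'}"
      using x0(1) b(1) b' a ne \<open>b \<noteq> b'\<close> edge_in_V edge_neq by auto
    fix u v assume "u \<in> {b, a, a'}" "v \<in> {b, a, a'}" "u \<noteq> v"
    then have "d u x0 \<noteq> d v x0 \<or> d u b' \<noteq> d v b'"
      using dist_b' dist_x0 by (auto dest: not_sym)
    then show "\<exists>w\<in>V - {b, a, a'}. d u w \<noteq> d v w" using w by blast
  qed
  then show ?thesis using distinct by simp
qed

lemma metric_dim_le_of_non_edge_across_neighbourhood:
  assumes tf: "triangle_free E" and x0: "x0 \<in> V" "\<forall>v\<in>V. d x0 v \<le> 2"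
    and outside_independent: "\<And>a a'. \<not> E x0 a \<Longrightarrow> \<not> E x0 a' \<Longrightarrow> \<not> E a a'"
    and a: "a \<in> V" "\<not> E x0 a" and b: "E x0 b" "\<not> E a b"
  shows "metric_dim V E \<le> card V - 3"
proof -
  have "a \<noteq> x0" using b by auto
  then obtain b' where b': "E x0 b'" "E b' a"
    using dist_eq_2_of_radius_2[OF x0 a(1) _ a(2)] dist_eq_2_imp_common_neighbour x0(1) a(1) by metis
  have bV: "b \<in> V" "b' \<in> V" using b b' edge_in_V by auto
  have "\<not> E b' b" using tf b(1) b'(1) edge_sym unfolding triangle_free_def by metis
  then have "d b' b = 2"
    using dist_le_2[OF edge_sym[OF b'(1)] b(1)] dist_eq_0_iff[OF bV(2,1)] dist_eq_1_iff[OF bV(2,1)]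
      b(2) b'(2) edge_sym by fastforce
  moreover have "d x0 b = 1" using dist_eq_1_iff x0(1) bV b(1) by blast
  moreover have "d a b \<noteq> 1" using dist_eq_1_iff a(1) bV b(2) by blast
  moreover have "d a b \<noteq> 2"
  proof
    assume "d a b = 2"
    then obtain y where "E a y" "E y b" using dist_eq_2_imp_common_neighbour a(1) bV by blast
    moreover from this have "\<not> E x0 y" using tf b(1) edge_sym unfolding triangle_free_def by metis
    ultimately show False using outside_independent a(2) by blast
  qed
  ultimately have inj: "inj_on (\<lambda>u. d u b) {x0, b', a}"
    by (simp add: inj_on_insert) auto
  have "b \<noteq> b'" using b(2) b'(2) edge_sym by auto
  then have b_out: "b \<in> V - {x0, b', a}" using bV(1) edge_neq[OF b(1)] a(2) b(1) by auto
  have "card {x0, b', a} = 3" using \<open>a \<noteq> x0\<close> b' edge_neq by auto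
  then show ?thesis using metric_dim_le_of_inj_dist[OF _ b_out inj] x0(1) bV a(1) by simp
qed

lemma neighbourhood_bipartition:
  assumes inside_independent: "\<And>a a'. E x0 a \<Longrightarrow> E x0 a' \<Longrightarrow> \<not> E a a'"
    and outside_independent: "\<And>a a'. \<not> E x0 a \<Longrightarrow> \<not> E x0 a' \<Longrightarrow> \<not> E a a'"
    and across_complete: "\<And>a b. a \<in> V \<Longrightarrow> \<not> E x0 a \<Longrightarrow> E x0 b \<Longrightarrow> E a b"
    and xy: "x \<in> V" "y \<in> V"
  shows "E x y \<longleftrightarrow> (x \<in> {v \<in> V. E x0 v} \<longleftrightarrow> y \<notin> {v \<in> V. E x0 v})"
proof (cases "E x0 x"; cases "E x0 y")
  assume "E x0 x" "E x0 y"
  then show ?thesis using inside_independent[of x y] xy by simp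
next
  assume x: "E x0 x" and y: "\<not> E x0 y"
  have "E x y" using edge_sym[OF across_complete[OF xy(2) y x]] .
  then show ?thesis using x y xy by simp
next
  assume x: "\<not> E x0 x" and y: "E x0 y"
  have "E x y" using across_complete[OF xy(1) x y] .
  then show ?thesis using x y xy by simp
next
  assume "\<not> E x0 x" "\<not> E x0 y"
  then show ?thesis using outside_independent[of x y] xy by simp
qed

lemma complete_bipartite_of_neighbourhood_partition:
  assumes tf: "triangle_free E" and c: "is_cycle V E c" "length c = 4"
    and outside_independent: "\<And>a a'. \<not> E (c ! 0) a \<Longrightarrow> \<not> E (c ! 0) a' \<Longrightarrow> \<not> E a a'"
    and across_complete: "\<And>a b. a \<in> V \<Longrightarrow> \<not> E (c ! 0) a \<Longrightarrow> E (c ! 0) b \<Longrightarrow> E a b"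
  shows "\<exists>r s. 2 \<le> r \<and> 2 \<le> s \<and>
    graph_iso V E (fst (complete_bipartite r s)) (snd (complete_bipartite r s))"
proof -
  let ?N = "{v \<in> V. E (c ! 0) v}"
  have inside_independent: "\<not> E x y" if "E (c ! 0) x" "E (c ! 0) y" for x y
    using tf that(1) edge_sym[OF that(2)] unfolding triangle_free_def by blast
  note partition = neighbourhood_bipartition[OF inside_independent outside_independent across_complete]
  have "?N \<subseteq> V" by blast
  from graph_iso_complete_bipartite[OF this partition]
  have iso: "graph_iso V E (fst (complete_bipartite (card (V - ?N)) (card ?N)))
      (snd (complete_bipartite (card (V - ?N)) (card ?N)))" .
  have e: "E (c ! 0) (c ! 1)" "E (c ! 1) (c ! 2)" "E (c ! 0) (c ! 3)"
    using cycle_edge_Suc[OF c(1), of 0] cycle_edge_Suc[OF c(1), of 1]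
      edge_sym[OF cycle_edge_last[OF c(1)]] c(2)
    by (simp_all add: numeral_2_eq_2)
  have "\<not> E (c ! 0) (c ! 2)" using inside_independent[OF e(1)] e(2) by blast
  then have "{c ! 0, c ! 2} \<subseteq> V - ?N" "{c ! 1, c ! 3} \<subseteq> ?N"
    using e edge_in_V edge_irrefl by auto
  moreover have "c ! 0 \<noteq> c ! 2" "c ! 1 \<noteq> c ! 3"
    using c nth_eq_iff_index_eq[of c 0 2] nth_eq_iff_index_eq[of c 1 3] by (auto simp: is_cycle_def)
  moreover have "finite (V - ?N)" "finite ?N" using finite_V by auto
  ultimately have "2 \<le> card (V - ?N)" "2 \<le> card ?N"
    using card_mono[of "V - ?N" "{c ! 0, c ! 2}"] card_mono[of ?N "{c ! 1, c ! 3}"] by auto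
  then show ?thesis using iso by blast
qed

lemma metric_dim_girth_4:
  assumes hc: "has_cycle V E" and g4: "girth V E = 4"
  shows "metric_dim V E \<le> card V - 3
    \<or> (\<exists>r s. 2 \<le> r \<and> 2 \<le> s \<and>
          graph_iso V E (fst (complete_bipartite r s)) (snd (complete_bipartite r s)))"
proof -
  have tf: "triangle_free E" using triangle_free_if_girth_ge_4 hc g4 by simp
  obtain c where c: "is_cycle V E c" "length c = 4" using obtain_girth_cycle hc g4 by metis
  let ?x0 = "c ! 0"
  have x0: "?x0 \<in> V" using cycle_nth_in_V[OF c(1)] c(2) by simp
  show ?thesis
  proof (cases "\<exists>v\<in>V. 3 \<le> d ?x0 v")
    case True
    then show ?thesis using metric_dim_le_of_dist[OF x0] by blast
  next
    case False
    then have radius: "\<forall>v\<in>V. d ?x0 v \<le> 2" by auto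
    show ?thesis
    proof (cases "\<exists>a a'. \<not> E ?x0 a \<and> \<not> E ?x0 a' \<and> E a a'")
      case True
      then show ?thesis using metric_dim_le_of_edge_outside_neighbourhood[OF tf x0 radius] by blast
    next
      case False
      then have independent: "\<And>a a'. \<not> E ?x0 a \<Longrightarrow> \<not> E ?x0 a' \<Longrightarrow> \<not> E a a'" by blast
      show ?thesis
      proof (cases "\<exists>a\<in>V. \<exists>b. \<not> E ?x0 a \<and> E ?x0 b \<and> \<not> E a b")
        case True
        then show ?thesis
          using metric_dim_le_of_non_edge_across_neighbourhood[OF tf x0 radius independent] by blast
      next
        case False
        then show ?thesis
          using complete_bipartite_of_neighbourhood_partition[OF tf c independent] by blast
      qed
    qed
  qed
qed

lemma metric_dim_complete_graph:
  assumes complete: "\<And>x y. x \<in> V \<Longrightarrow> y \<in> V \<Longrightarrow> E x y \<longleftrightarrow> x \<noteq> y"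
  shows "card V - 1 \<le> metric_dim V E"
proof (rule le_metric_dim, rule ccontr)
  fix W assume W: "resolving_set V E W" and "\<not> card V - 1 \<le> card W"
  then have "2 \<le> card (V - W)"
    using card_Diff_resolving_set[OF W] by linarith
  then obtain u v where uv: "u \<in> V - W" "v \<in> V - W" "u \<noteq> v" by (rule obtain_two_elements)
  have "twins u v" by (rule twinsI) (use complete uv in auto)
  then show False using twins_not_resolved[OF W uv(1,2)] uv(3) by simp
qed

lemma metric_dim_complete_bipartite:
  assumes bipartite: "\<And>x y. x \<in> V \<Longrightarrow> y \<in> V \<Longrightarrow> E x y \<longleftrightarrow> (x \<in> B \<longleftrightarrow> y \<notin> B)"
  shows "card V - 2 \<le> metric_dim V E"
proof (rule le_metric_dim, rule ccontr)
  fix W assume W: "resolving_set V E W" and "\<not> card V - 2 \<le> card W"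
  then have "3 \<le> card (V - W)"
    using card_Diff_resolving_set[OF W] by linarith
  then obtain T where "T \<subseteq> V - W" "card T = 3" by (rule obtain_subset_with_card_n)
  then obtain p q t where pqt: "p \<in> V - W" "q \<in> V - W" "t \<in> V - W" "p \<noteq> q" "q \<noteq> t" "p \<noteq> t"
    by (auto simp: card_3_iff)
  have "\<exists>u v. u \<in> V - W \<and> v \<in> V - W \<and> u \<noteq> v \<and> (u \<in> B \<longleftrightarrow> v \<in> B)"
  proof (cases "p \<in> B \<longleftrightarrow> q \<in> B")
    case False
    then have "(p \<in> B \<longleftrightarrow> t \<in> B) \<or> (q \<in> B \<longleftrightarrow> t \<in> B)" by blast
    then show ?thesis using pqt by blast
  qed (use pqt in blast)
  then obtain u v where uv: "u \<in> V - W" "v \<in> V - W" "u \<noteq> v" "u \<in> B \<longleftrightarrow> v \<in> B" by blast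
  have "twins u v" by (rule twinsI) (use bipartite uv in auto)
  then show False using twins_not_resolved[OF W uv(1,2)] uv(3) by simp
qed

lemma girth_ge_4_if_triangle_free:
  assumes "has_cycle V E" "triangle_free E"
  shows "4 \<le> girth V E"
proof (rule ccontr)
  assume "\<not> 4 \<le> girth V E"
  then have "girth V E = 3" using girth_ge_3[OF assms(1)] by simp
  then obtain c where c: "is_cycle V E c" "length c = 3" using obtain_girth_cycle assms(1) by metis
  then have "E (c ! 0) (c ! 1)" "E (c ! 1) (c ! 2)" "E (c ! 2) (c ! 0)"
    using cycle_edge_Suc[OF c(1), of 0] cycle_edge_Suc[OF c(1), of 1] cycle_edge_last[OF c(1)]
    by (simp_all add: numeral_2_eq_2)
  then show False using assms(2) unfolding triangle_free_def by blast
qed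

lemma cycle_graph_iso_cycle_closed:
  assumes iso: "graph_iso V E (fst (cycle_graph (card V))) (snd (cycle_graph (card V)))"
    and c: "is_cycle V E c" and z: "E (c ! 0) z"
  shows "z \<in> set c"
proof -
  have g: "3 \<le> length c" "length c \<le> card V" using c cycle_length_le_card by (auto simp: is_cycle_def)
  moreover have "c ! 0 \<in> V" using cycle_nth_in_V[OF c, of 0] g(1) by linarith
  ultimately obtain u v where "u \<noteq> v"
    and only: "\<And>w. E (c ! 0) w \<Longrightarrow> w = u \<or> w = v"
    using graph_iso_cycle_graph_neighbours[OF iso] by (metis le_trans)
  have "E (c ! 0) (c ! 1)" "E (c ! 0) (c ! (length c - 1))"
    using cycle_edge_Suc[OF c, of 0] edge_sym[OF cycle_edge_last[OF c]] g by auto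
  moreover have "c ! 1 \<noteq> c ! (length c - 1)"
    using c g nth_eq_iff_index_eq[of c 1 "length c - 1"] by (auto simp: is_cycle_def)
  moreover have "c ! 1 \<in> set c" "c ! (length c - 1) \<in> set c" using g by auto
  ultimately show ?thesis using only[OF z] only by metis
qed

lemma girth_cycle_graph:
  assumes iso: "graph_iso V E (fst (cycle_graph (card V))) (snd (cycle_graph (card V)))"
    and hc: "has_cycle V E"
  shows "card V \<le> girth V E"
proof -
  obtain c where c: "is_cycle V E c" "length c = girth V E" using obtain_girth_cycle hc by blast
  have "c \<noteq> []" and sub: "set c \<subseteq> V" using c(1) by (auto simp: is_cycle_def)
  have "set c = V"
  proof (rule ccontr)
    assume "set c \<noteq> V"
    then obtain b where "b \<in> V - set c" using sub by blast
    then obtain y z where "y \<in> set c" "z \<notin> set c" "E y z"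
      using obtain_edge_leaving[OF sub, of "c ! 0"] \<open>c \<noteq> []\<close> by auto
    then obtain i where i: "i < length c" "c ! i = y" by (auto simp: in_set_conv_nth)
    then have "rotate i c ! 0 = y" using \<open>c \<noteq> []\<close> by (simp add: nth_rotate)
    then have "z \<in> set (rotate i c)"
      using cycle_graph_iso_cycle_closed[OF iso rotate_cycle[OF c(1)]] \<open>E y z\<close> by blast
    then show False using \<open>z \<notin> set c\<close> by simp
  qed
  then show ?thesis using c distinct_card[of c] by (simp add: is_cycle_def)
qed

lemma metric_dim_cycle_graph:
  assumes iso: "graph_iso V E (fst (cycle_graph (card V))) (snd (cycle_graph (card V)))"
    and n: "3 \<le> card V"
  shows "2 \<le> metric_dim V E"
proof (rule le_metric_dim)
  fix W assume W: "resolving_set V E W"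
  have "2 \<le> card V" using n by simp
  then obtain u v where "u \<in> V" "v \<in> V" "u \<noteq> v" by (rule obtain_two_elements)
  then obtain w where w: "w \<in> W" "w \<in> V" using W unfolding resolving_set_def by blast
  then obtain u v where uv: "u \<noteq> v" "E w u" "E w v"
    using graph_iso_cycle_graph_neighbours[OF iso n] by metis
  have uvV: "u \<in> V" "v \<in> V" using uv edge_in_V(2) by auto
  then have "d u w = 1" "d v w = 1"
    using dist_eq_1_iff w(2) edge_sym[OF uv(2)] edge_sym[OF uv(3)] by auto
  obtain w' where "w' \<in> W" "d u w' \<noteq> d v w'" using W uv(1) uvV unfolding resolving_set_def by blast
  then have "{w, w'} \<subseteq> W" "w \<noteq> w'" using w \<open>d u w = 1\<close> \<open>d v w = 1\<close> by auto
  moreover have "finite W" using W finite_V finite_subset unfolding resolving_set_def by blast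
  ultimately show "2 \<le> card W" using card_mono[of W "{w, w'}"] by auto
qed

lemma metric_dim_eq_imp_extremal:
  assumes hc: "has_cycle V E" and eq: "metric_dim V E = card V - girth V E + 2"
  shows "graph_iso V E (fst (cycle_graph (card V))) (snd (cycle_graph (card V)))
    \<or> (3 \<le> card V \<and> graph_iso V E (fst (complete_graph (card V))) (snd (complete_graph (card V))))
    \<or> (\<exists>r s. 2 \<le> r \<and> 2 \<le> s \<and>
          graph_iso V E (fst (complete_bipartite r s)) (snd (complete_bipartite r s)))"
proof -
  have g: "3 \<le> girth V E" "girth V E \<le> card V" using girth_ge_3[OF hc] girth_le_card[OF hc] .
  consider "girth V E = 3" | "girth V E = 4" | "5 \<le> girth V E" using g(1) by linarith
  then show ?thesis
  proof cases
    case 1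
    have "E x y \<longleftrightarrow> x \<noteq> y" if "x \<in> V" "y \<in> V" for x y
      using metric_dim_le_of_non_edge[OF that] edge_neq eq 1 g(2) by fastforce
    then show ?thesis using graph_iso_complete_graph_iff 1 g(2) by auto
  next
    case 2
    then show ?thesis using metric_dim_girth_4[OF hc] eq g(2) by auto
  next
    case 3
    then show ?thesis using metric_dim_girth_ge_5[OF hc] eq by auto
  qed
qed

lemma extremal_imp_metric_dim_eq:
  assumes hc: "has_cycle V E"
    and extremal: "graph_iso V E (fst (cycle_graph (card V))) (snd (cycle_graph (card V)))
      \<or> (3 \<le> card V \<and> graph_iso V E (fst (complete_graph (card V))) (snd (complete_graph (card V))))
      \<or> (\<exists>r s. 2 \<le> r \<and> 2 \<le> s \<and>
            graph_iso V E (fst (complete_bipartite r s)) (snd (complete_bipartite r s)))"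
  shows "metric_dim V E = card V - girth V E + 2"
proof -
  have g: "3 \<le> girth V E" "girth V E \<le> card V" using girth_ge_3[OF hc] girth_le_card[OF hc] .
  from extremal have "card V - girth V E + 2 \<le> metric_dim V E"
  proof (elim disjE conjE exE)
    assume iso: "graph_iso V E (fst (cycle_graph (card V))) (snd (cycle_graph (card V)))"
    then show ?thesis using metric_dim_cycle_graph[OF iso] girth_cycle_graph[OF iso hc] g by linarith
  next
    assume "graph_iso V E (fst (complete_graph (card V))) (snd (complete_graph (card V)))"
    then have "card V - 1 \<le> metric_dim V E"
      using metric_dim_complete_graph graph_iso_complete_graph_iff by blast
    then show ?thesis using g by linarith
  next
    fix r s assume iso: "graph_iso V E (fst (complete_bipartite r s)) (snd (complete_bipartite r s))"
    obtain B where B: "\<And>x y. x \<in> V \<Longrightarrow> y \<in> V \<Longrightarrow> E x y \<longleftrightarrow> (x \<in> B \<longleftrightarrow> y \<notin> B)"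
      using graph_iso_complete_bipartite_sides[OF iso] by metis
    have "triangle_free E"
      unfolding triangle_free_def using B edge_in_V by metis
    then have "4 \<le> girth V E" by (rule girth_ge_4_if_triangle_free[OF hc])
    then show ?thesis using metric_dim_complete_bipartite[OF B] g by linarith
  qed
  then show ?thesis using metric_dim_le_card_minus_girth[OF hc] by linarith
qed

end

theorem theorem2p5:
  fixes V :: "'a set" and E :: "'a \<Rightarrow> 'a \<Rightarrow> bool"
  assumes "simple_graph V E" and "connected_graph V E" and "has_cycle V E"
  shows "metric_dim V E = card V - girth V E + 2 \<longleftrightarrow>
    (graph_iso V E (fst (cycle_graph (card V))) (snd (cycle_graph (card V)))
     \<or> (card V \<ge> 3 \<and> graph_iso V E (fst (complete_graph (card V))) (snd (complete_graph (card V))))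
     \<or> (\<exists>r s. r \<ge> 2 \<and> s \<ge> 2 \<and>
          graph_iso V E (fst (complete_bipartite r s)) (snd (complete_bipartite r s))))"
proof -
  interpret connected_simple_graph V E
    using assms(1,2) by unfold_locales
  show ?thesis
    using metric_dim_eq_imp_extremal[OF assms(3)] extremal_imp_metric_dim_eq[OF assms(3)] by blast
qed

end
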